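(* Every countably infinite, connected, vertex-transitive graph (vertex degrees not necessarily finite) has a perfect matching.
   Context: A perfect matching of a graph is a set of pairwise disjoint edges, none a loop, covering every vertex. *)

theory Defs
  imports Main "HOL-Library.Countable_Set"
begin

text \<open>A graph is given by a vertex set V and a symmetric adjacency relation E
  whose edges lie inside V. Loops (E v v) are permitted; they play no role.\<close>

definition graph :: "'a set \<Rightarrow> ('a \<Rightarrow> 'a \<Rightarrow> bool) \<Rightarrow> bool" where
  "graph V E \<longleftrightarrow> (\<forall>u v. E u v \<longrightarrow> u \<in> V \<and> v \<in> V) \<and> (\<forall>u v. E u v \<longrightarrow> E v u)"

definition connected_graph :: "'a set \<Rightarrow> ('a \<Rightarrow> 'a \<Rightarrow> bool) \<Rightarrow> bool" where
  "connected_graph V E \<longleftrightarrow> (\<forall>u\<in>V. \<forall>v\<in>V. E\<^sup>*\<^sup>* u v)"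

definition graph_automorphism :: "'a set \<Rightarrow> ('a \<Rightarrow> 'a \<Rightarrow> bool) \<Rightarrow> ('a \<Rightarrow> 'a) \<Rightarrow> bool" where
  "graph_automorphism V E f \<longleftrightarrow> bij_betw f V V \<and> (\<forall>u\<in>V. \<forall>v\<in>V. E (f u) (f v) \<longleftrightarrow> E u v)"

definition vertex_transitive :: "'a set \<Rightarrow> ('a \<Rightarrow> 'a \<Rightarrow> bool) \<Rightarrow> bool" where
  "vertex_transitive V E \<longleftrightarrow> (\<forall>u\<in>V. \<forall>v\<in>V. \<exists>f. graph_automorphism V E f \<and> f u = v)"

definition perfect_matching :: "'a set \<Rightarrow> ('a \<Rightarrow> 'a \<Rightarrow> bool) \<Rightarrow> 'a set set \<Rightarrow> bool" where
  "perfect_matching V E M \<longleftrightarrow>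
     (\<forall>e\<in>M. \<exists>u v. e = {u, v} \<and> u \<noteq> v \<and> E u v) \<and>
     (\<forall>e1\<in>M. \<forall>e2\<in>M. e1 \<noteq> e2 \<longrightarrow> e1 \<inter> e2 = {}) \<and>
     (\<forall>v\<in>V. \<exists>e\<in>M. v \<in> e)"

end

(* If some vertex, hence every vertex, has infinite degree, a greedy choice along an enumeration
   of V gives a perfect matching. Otherwise the graph is d-regular with d > 0, and Mader's atom
   argument shows that every finite nonempty set of vertices is left by at least d edges. For a
   finite set F, enlarge F and its neighbours to a finite set X of even size, keep the edges at F
   and turn X - F into a clique. An odd component of X - S either meets that clique (at most one
   does) or lies in F and sends at least d edges into S, which receives at most d |S| of them;
   with parity this is Tutte's condition, so Tutte's theorem yields a matching covering F. Since degrees are finite, a compactness argument along an enumeration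
   of V assembles these into a perfect matching. *)

theory Submission
  imports Defs "HOL-Library.Disjoint_Sets"
begin

section \<open>Components of induced subgraphs\<close>

definition simple_graph :: "'a set \<Rightarrow> ('a \<Rightarrow> 'a \<Rightarrow> bool) \<Rightarrow> bool" where
  "simple_graph X R \<longleftrightarrow> (\<forall>u v. R u v \<longrightarrow> u \<in> X \<and> v \<in> X \<and> u \<noteq> v \<and> R v u)"

definition induced :: "'a set \<Rightarrow> ('a \<Rightarrow> 'a \<Rightarrow> bool) \<Rightarrow> 'a \<Rightarrow> 'a \<Rightarrow> bool" where
  "induced Y R u v \<longleftrightarrow> R u v \<and> u \<in> Y \<and> v \<in> Y"

definition component :: "'a set \<Rightarrow> ('a \<Rightarrow> 'a \<Rightarrow> bool) \<Rightarrow> 'a \<Rightarrow> 'a set" where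
  "component Y R x = {y. (induced Y R)\<^sup>*\<^sup>* x y}"

definition components :: "'a set \<Rightarrow> ('a \<Rightarrow> 'a \<Rightarrow> bool) \<Rightarrow> 'a set set" where
  "components Y R = component Y R ` Y"

definition odd_components :: "'a set \<Rightarrow> ('a \<Rightarrow> 'a \<Rightarrow> bool) \<Rightarrow> 'a set set" where
  "odd_components Y R = {C \<in> components Y R. odd (card C)}"

lemma simple_graph_symp: "simple_graph X R \<Longrightarrow> symp R"
  by (auto simp: simple_graph_def symp_def)

lemma self_in_component: "x \<in> Y \<Longrightarrow> x \<in> component Y R x"
  by (simp add: component_def)

lemma component_subset: "x \<in> Y \<Longrightarrow> component Y R x \<subseteq> Y"
proof
  fix y assume "x \<in> Y" "y \<in> component Y R x"
  then show "y \<in> Y"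
    unfolding component_def by (auto elim: rtranclp.cases simp: induced_def)
qed

lemma component_eq:
  assumes "symp R" and "y \<in> component Y R x"
  shows "component Y R y = component Y R x"
proof -
  have "symp (induced Y R)"
    using assms(1) by (auto simp: symp_def induced_def)
  then have "(induced Y R)\<^sup>*\<^sup>* y x"
    using assms(2) symp_rtranclp by (auto simp: component_def dest: sympD)
  then show ?thesis
    using assms(2) unfolding component_def by (auto intro: rtranclp_trans)
qed

lemma components_eq_component:
  "symp R \<Longrightarrow> C \<in> components Y R \<Longrightarrow> x \<in> C \<Longrightarrow> C = component Y R x"
  using component_eq by (fastforce simp: components_def)

lemma components_disjoint:
  "symp R \<Longrightarrow> C1 \<in> components Y R \<Longrightarrow> C2 \<in> components Y R \<Longrightarrow> C1 \<noteq> C2 \<Longrightarrow> C1 \<inter> C2 = {}"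
  using components_eq_component[of R _ Y] by blast

lemma pairwise_disjnt_components: "symp R \<Longrightarrow> pairwise disjnt (components Y R)"
  using components_disjoint by (fastforce simp: pairwise_def disjnt_def)

lemma Union_components: "\<Union>(components Y R) = Y"
  using self_in_component component_subset by (fastforce simp: components_def)

lemma components_nonempty: "C \<in> components Y R \<Longrightarrow> C \<noteq> {}"
  using self_in_component by (fastforce simp: components_def)

lemma components_subset: "C \<in> components Y R \<Longrightarrow> C \<subseteq> Y"
  using component_subset by (fastforce simp: components_def)

lemma finite_components: "finite Y \<Longrightarrow> finite (components Y R)"
  by (simp add: components_def)

lemma finite_in_components: "finite Y \<Longrightarrow> C \<in> components Y R \<Longrightarrow> finite C"
  using components_subset finite_subset by metis

lemma card_eq_sum_card_components:
  assumes "symp R" and "finite Y"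
  shows "card Y = (\<Sum>C\<in>components Y R. card C)"
proof -
  have "pairwise disjnt (components Y R)"
    using assms(1) by (rule pairwise_disjnt_components)
  moreover have "\<And>C. C \<in> components Y R \<Longrightarrow> finite C"
    using finite_in_components[OF assms(2)] .
  ultimately have "card (\<Union>(components Y R)) = sum card (components Y R)"
    by (rule card_Union_disjoint)
  then show ?thesis
    by (simp add: Union_components)
qed

lemma even_card_iff_even_card_odd_components:
  assumes "symp R" and "finite Y"
  shows "even (card Y) \<longleftrightarrow> even (card (odd_components Y R))"
  using even_sum_iff[OF finite_components[OF assms(2)], of card]
  by (simp add: card_eq_sum_card_components[OF assms] odd_components_def)

lemma component_mono:
  "(\<And>u v. R u v \<Longrightarrow> R' u v) \<Longrightarrow> component Y R x \<subseteq> component Y R' x"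
proof -
  assume "\<And>u v. R u v \<Longrightarrow> R' u v"
  then have "induced Y R \<le> induced Y R'"
    by (auto simp: induced_def)
  then have "(induced Y R)\<^sup>*\<^sup>* \<le> (induced Y R')\<^sup>*\<^sup>*"
    by (rule rtranclp_mono)
  then show ?thesis
    unfolding component_def by auto
qed

text \<open>An odd component of the supergraph is a disjoint union of components of the subgraph.\<close>

lemma odd_component_contains_odd_component:
  assumes "symp R" "symp R'" and mono: "\<And>u v. R u v \<Longrightarrow> R' u v" and "finite Y"
    and C: "C \<in> odd_components Y R'"
  shows "\<exists>D\<in>odd_components Y R. D \<subseteq> C"
proof -
  let ?D = "{D \<in> components Y R. D \<subseteq> C}"
  have CK: "C \<in> components Y R'" and odd: "odd (card C)"
    using C by (auto simp: odd_components_def)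
  have sub: "D \<subseteq> C" if "D \<in> components Y R" "y \<in> D" "y \<in> C" for D y
  proof -
    have "D = component Y R y" "C = component Y R' y"
      using that components_eq_component[OF assms(1)] components_eq_component[OF assms(2) CK]
      by auto
    then show ?thesis
      using component_mono[of R R'] mono by auto
  qed
  have "y \<in> \<Union>?D" if "y \<in> C" for y
  proof -
    have "y \<in> Y"
      using that components_subset[OF CK] by auto
    then obtain D where "D \<in> components Y R" "y \<in> D"
      using Union_components[of Y R] by auto
    then show ?thesis
      using that sub by blast
  qed
  with sub have union: "\<Union>?D = C"
    by blast
  have "pairwise disjnt ?D"
    using pairwise_disjnt_components[OF assms(1)] by (rule pairwise_subset) blast
  moreover have "\<And>D. D \<in> ?D \<Longrightarrow> finite D"
    using finite_in_components[OF assms(4)] by blast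
  ultimately have "card (\<Union>?D) = sum card ?D"
    by (rule card_Union_disjoint)
  then have "card C = sum card ?D"
    by (simp only: union)
  moreover have "finite ?D"
    using finite_components[OF assms(4)] by simp
  ultimately have "odd (card {D \<in> ?D. odd (card D)})"
    using odd even_sum_iff by metis
  then have "{D \<in> ?D. odd (card D)} \<noteq> {}"
    by (metis card.empty even_zero)
  then show ?thesis
    by (auto simp: odd_components_def)
qed

lemma card_odd_components_antimono:
  assumes "symp R" "symp R'" and "\<And>u v. R u v \<Longrightarrow> R' u v" and "finite Y"
  shows "card (odd_components Y R') \<le> card (odd_components Y R)"
proof -
  define f where "f C = (SOME D. D \<in> odd_components Y R \<and> D \<subseteq> C)" for C
  have f: "f C \<in> odd_components Y R \<and> f C \<subseteq> C" if "C \<in> odd_components Y R'" for C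
  proof -
    have "\<exists>D. D \<in> odd_components Y R \<and> D \<subseteq> C"
      using odd_component_contains_odd_component[of R R' Y C] assms that by blast
    then show ?thesis
      unfolding f_def by (rule someI_ex)
  qed
  have "inj_on f (odd_components Y R')"
  proof
    fix C1 C2 assume C: "C1 \<in> odd_components Y R'" "C2 \<in> odd_components Y R'" "f C1 = f C2"
    have "f C1 \<subseteq> C1 \<inter> C2"
      using f C by auto
    moreover have "f C1 \<noteq> {}"
      using f[OF C(1)] components_nonempty by (auto simp: odd_components_def)
    ultimately have "C1 \<inter> C2 \<noteq> {}"
      by blast
    then show "C1 = C2"
      using components_disjoint[OF assms(2)] C by (auto simp: odd_components_def)
  qed
  moreover have "f ` odd_components Y R' \<subseteq> odd_components Y R"
    using f by auto
  moreover have "finite (odd_components Y R)"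
    using finite_components[OF assms(4)] by (simp add: odd_components_def)
  ultimately show ?thesis
    by (rule card_inj_on_le)
qed

section \<open>Tutte's theorem\<close>

definition perfect_matching_map :: "'a set \<Rightarrow> ('a \<Rightarrow> 'a \<Rightarrow> bool) \<Rightarrow> ('a \<Rightarrow> 'a) \<Rightarrow> bool" where
  "perfect_matching_map X R p \<longleftrightarrow> (\<forall>x\<in>X. p x \<in> X \<and> p x \<noteq> x \<and> p (p x) = x \<and> R x (p x))"

definition tutte_condition :: "'a set \<Rightarrow> ('a \<Rightarrow> 'a \<Rightarrow> bool) \<Rightarrow> bool" where
  "tutte_condition X R \<longleftrightarrow> (\<forall>S\<subseteq>X. card (odd_components (X - S) R) \<le> card S)"

definition add_edge :: "('a \<Rightarrow> 'a \<Rightarrow> bool) \<Rightarrow> 'a \<Rightarrow> 'a \<Rightarrow> 'a \<Rightarrow> 'a \<Rightarrow> bool" where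
  "add_edge R a b u v \<longleftrightarrow> R u v \<or> (u = a \<and> v = b) \<or> (u = b \<and> v = a)"

lemma perfect_matching_map_restrict:
  assumes "perfect_matching_map X R' p" "A \<subseteq> X" "\<And>a. a \<in> A \<Longrightarrow> p a \<in> A \<and> R a (p a)"
  shows "perfect_matching_map A R p"
  using assms by (auto simp: perfect_matching_map_def)

lemma perfect_matching_map_Un:
  assumes "perfect_matching_map A R p" "perfect_matching_map B R q" "A \<inter> B = {}"
  shows "\<exists>r. perfect_matching_map (A \<union> B) R r"
proof -
  have "perfect_matching_map (A \<union> B) R (\<lambda>v. if v \<in> A then p v else q v)"
    using assms unfolding perfect_matching_map_def by (smt (verit) IntI Un_iff empty_iff)
  then show ?thesis by blast
qed

lemma perfect_matching_map_UN:
  assumes "\<And>i. i \<in> I \<Longrightarrow> \<exists>p. perfect_matching_map (B i) R p" and "disjoint_family_on B I"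
  shows "\<exists>p. perfect_matching_map (\<Union>i\<in>I. B i) R p"
proof -
  obtain f where f: "\<And>i. i \<in> I \<Longrightarrow> perfect_matching_map (B i) R (f i)"
    using assms(1) by metis
  define index where "index x = (THE i. i \<in> I \<and> x \<in> B i)" for x
  have index: "index x = i" if "i \<in> I" "x \<in> B i" for x i
    unfolding index_def
    using that assms(2) by (intro the_equality) (auto simp: disjoint_family_on_def)
  define p where "p x = f (index x) x" for x
  have "perfect_matching_map (\<Union>i\<in>I. B i) R p"
    unfolding perfect_matching_map_def
  proof
    fix x assume "x \<in> (\<Union>i\<in>I. B i)"
    then obtain i where i: "i \<in> I" "x \<in> B i" by blast
    then have "f i x \<in> B i" "f i x \<noteq> x" "f i (f i x) = x" "R x (f i x)"
      using f[OF i(1)] by (auto simp: perfect_matching_map_def)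
    then show "p x \<in> (\<Union>i\<in>I. B i) \<and> p x \<noteq> x \<and> p (p x) = x \<and> R x (p x)"
      using i index by (auto simp: p_def)
  qed
  then show ?thesis by blast
qed

lemma perfect_matching_map_even_clique:
  assumes "finite P" "even (card P)" "\<And>a b. a \<in> P \<Longrightarrow> b \<in> P \<Longrightarrow> a \<noteq> b \<Longrightarrow> R a b"
  shows "\<exists>p. perfect_matching_map P R p"
  using assms
proof (induction "card P" arbitrary: P rule: less_induct)
  case less
  show ?case
  proof (cases "P = {}")
    case True
    then have "perfect_matching_map P R id"
      by (simp add: perfect_matching_map_def)
    then show ?thesis by blast
  next
    case False
    then obtain a where a: "a \<in> P" by auto
    have "card P \<noteq> 0"
      using a less.prems(1) by auto
    then have "card P \<ge> 2"
      using less.prems(2) by presburger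
    then have "card (P - {a}) \<noteq> 0"
      using a less.prems(1) by (simp add: card_Diff_singleton)
    then have "P - {a} \<noteq> {}"
      by force
    then obtain b where b: "b \<in> P" "b \<noteq> a"
      by blast
    let ?P = "P - {a, b}"
    have lt: "card ?P < card P"
      using a b less.prems(1) by (metis Diff_insert2 card_Diff2_less)
    have "card ?P = card P - 2"
      using a b less.prems(1) by (simp add: card_Diff_subset)
    then have "even (card ?P)"
      using less.prems(2) lt by (simp add: even_diff_nat)
    then obtain p where p: "perfect_matching_map ?P R p"
      using less.hyps[OF lt] less.prems by auto
    have "perfect_matching_map P R (\<lambda>v. if v = a then b else if v = b then a else p v)"
      using p a b less.prems(3) by (auto simp: perfect_matching_map_def)
    then show ?thesis by blast
  qed
qed

lemma even_card_if_tutte_condition: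
  assumes "finite X" "simple_graph X R" "tutte_condition X R"
  shows "even (card X)"
proof -
  have "card (odd_components (X - {}) R) \<le> card ({} :: 'a set)"
    using assms(3) unfolding tutte_condition_def by blast
  then show ?thesis
    using even_card_iff_even_card_odd_components[OF simple_graph_symp[OF assms(2)] assms(1)] by simp
qed

lemma even_card_diff_odd_components:
  assumes fin: "finite X" and sg: "simple_graph X R" and tutte: "tutte_condition X R"
    and SX: "S \<subseteq> X"
  shows "even (card S - card (odd_components (X - S) R))"
proof -
  have "even (card X)"
    using fin sg tutte by (rule even_card_if_tutte_condition)
  moreover have "card X = card S + card (X - S)"
    using card_Diff_subset[OF finite_subset[OF SX fin] SX] card_mono[OF fin SX] by simp
  moreover have "even (card (X - S)) \<longleftrightarrow> even (card (odd_components (X - S) R))"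
    using fin by (intro even_card_iff_even_card_odd_components[OF simple_graph_symp[OF sg]]) simp
  moreover have "card (odd_components (X - S) R) \<le> card S"
    using tutte SX by (simp add: tutte_condition_def)
  ultimately show ?thesis
    by presburger
qed

lemma induced_path_in_component:
  assumes "(induced Y R)\<^sup>*\<^sup>* a b" "\<not> R a b" "a \<noteq> b"
  shows "\<exists>y z. R a y \<and> R y z \<and> \<not> R a z \<and> z \<noteq> a \<and> y \<in> Y \<and> z \<in> Y"
  using assms
proof (induction rule: rtranclp_induct)
  case (step y z)
  then show ?case
    by (cases "y = a \<or> R a y") (auto simp: induced_def)
qed simp

text \<open>Tutte's condition injects the odd components of \<open>X - S\<close> into the universal vertices \<open>S\<close>;
  each odd component is matched together with its vertex of \<open>S\<close>, the rest inside cliques, and the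
  leftover part of \<open>S\<close> is even by parity.\<close>

lemma perfect_matching_map_if_components_complete:
  assumes fin: "finite X" and sg: "simple_graph X R" and tutte: "tutte_condition X R"
    and S: "S = {v \<in> X. \<forall>u\<in>X. u \<noteq> v \<longrightarrow> R v u}"
    and complete: "\<And>C a b. C \<in> components (X - S) R \<Longrightarrow> a \<in> C \<Longrightarrow> b \<in> C \<Longrightarrow> a \<noteq> b \<Longrightarrow> R a b"
  shows "\<exists>p. perfect_matching_map X R p"
proof -
  let ?K = "components (X - S) R" and ?O = "odd_components (X - S) R"
  have sym: "symp R"
    using sg by (rule simple_graph_symp)
  have SX: "S \<subseteq> X" and finS: "finite S"
    using S fin by auto
  have OK: "?O \<subseteq> ?K" and finO: "finite ?O"
    using finite_components[of "X - S" R] fin by (auto simp: odd_components_def)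
  have "card ?O \<le> card S"
    using tutte SX by (simp add: tutte_condition_def)
  then obtain g where g: "g ` ?O \<subseteq> S" "inj_on g ?O"
    using card_le_inj[OF finO finS] by blast
  have gS: "g C \<in> S" if "C \<in> ?O" for C
    using g that by blast
  have universal: "R s u" "R u s" if "s \<in> S" "u \<in> X" "u \<noteq> s" for s u
    using that S sym by (auto dest: sympD)
  have CXS: "C \<subseteq> X - S" if "C \<in> ?K" for C
    using that by (rule components_subset)
  define block where "block C = (if C \<in> ?O then insert (g C) C else C)" for C
  define S' where "S' = S - g ` ?O"
  have "\<exists>p. perfect_matching_map (block C) R p" if C: "C \<in> ?K" for C
  proof (rule perfect_matching_map_even_clique)
    have "g C \<notin> C" if "C \<in> ?O"
      using g that CXS[OF C] by blast
    then show "even (card (block C))"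
      using finite_in_components[OF _ C] fin by (auto simp: block_def odd_components_def C)
    show "finite (block C)"
      using finite_in_components[OF _ C] fin by (simp add: block_def)
    show "R a b" if "a \<in> block C" "b \<in> block C" "a \<noteq> b" for a b
      using that complete[OF C] universal gS CXS[OF C] by (auto simp: block_def split: if_splits)
  qed
  moreover have "disjoint_family_on block ?K"
    unfolding disjoint_family_on_def
  proof (intro ballI impI)
    fix C1 C2 assume C: "C1 \<in> ?K" "C2 \<in> ?K" "C1 \<noteq> C2"
    then have "C1 \<inter> C2 = {}"
      by (rule components_disjoint[OF sym])
    moreover have "g C1 \<noteq> g C2" if "C1 \<in> ?O" "C2 \<in> ?O"
      using g(2) that C(3) by (auto dest: inj_onD)
    ultimately show "block C1 \<inter> block C2 = {}"
      using g CXS[OF C(1)] CXS[OF C(2)] by (auto simp: block_def)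
  qed
  ultimately obtain p1 where p1: "perfect_matching_map (\<Union>C\<in>?K. block C) R p1"
    using perfect_matching_map_UN by blast
  have "card S' = card S - card ?O"
    using card_Diff_subset[OF finite_imageI[OF finO] g(1)] card_image[OF g(2)] by (simp add: S'_def)
  then have "even (card S')"
    using even_card_diff_odd_components[OF fin sg tutte SX] by simp
  moreover have "finite S'"
    using finS by (simp add: S'_def)
  moreover have "R a b" if "a \<in> S'" "b \<in> S'" "a \<noteq> b" for a b
    using that universal SX by (auto simp: S'_def)
  ultimately obtain p2 where p2: "perfect_matching_map S' R p2"
    using perfect_matching_map_even_clique by blast
  have "block C = C \<union> g ` (?O \<inter> {C})" for C
    by (auto simp: block_def)
  then have "(\<Union>C\<in>?K. block C) = \<Union>?K \<union> (\<Union>C\<in>?K. g ` (?O \<inter> {C}))"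
    by (simp add: UN_Un_distrib)
  also have "\<dots> = (X - S) \<union> g ` ?O"
    using OK Union_components[of "X - S" R] by blast
  finally have "(\<Union>C\<in>?K. block C) \<union> S' = X \<and> (\<Union>C\<in>?K. block C) \<inter> S' = {}"
    using g SX by (auto simp: S'_def)
  then show ?thesis
    using perfect_matching_map_Un[OF p1 p2] by auto
qed

definition dangling :: "('a \<Rightarrow> 'a) \<Rightarrow> 'a set \<Rightarrow> 'a set \<Rightarrow> nat" where
  "dangling f T A = card {v \<in> A. v \<notin> T \<and> f v \<notin> A}"

lemma dangling_insert:
  assumes fin: "finite A" and u: "u \<notin> A" and inv: "\<And>v. v \<in> insert u A \<Longrightarrow> f (f v) = v"
    and nfix: "f u \<noteq> u"
    and Tc: "\<And>v. v \<in> insert u A \<Longrightarrow> (v \<in> T \<longleftrightarrow> f v \<in> T)"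
  shows "int (dangling f T (insert u A)) + of_bool (u \<notin> T \<and> f u \<in> A)
       = int (dangling f T A) + of_bool (u \<notin> T \<and> f u \<notin> A)"
proof -
  let ?SA = "{v \<in> A. v \<notin> T \<and> f v \<notin> A}"
  let ?SB = "{v \<in> insert u A. v \<notin> T \<and> f v \<notin> insert u A}"
  let ?U = "if u \<notin> T \<and> f u \<notin> A then {u} else {}"
  have finSA: "finite ?SA"
    using fin by simp
  have "?SB = (?SA - {f u}) \<union> ?U"
  proof (intro set_eqI iffI)
    fix v assume v: "v \<in> ?SB"
    show "v \<in> (?SA - {f u}) \<union> ?U"
    proof (cases "v = u")
      case False
      then have "f v \<noteq> u" "v \<in> A"
        using v by auto
      then show ?thesis
        using v False inv[of u] by auto
    qed (use v in auto)
  next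
    fix v assume v: "v \<in> (?SA - {f u}) \<union> ?U"
    show "v \<in> ?SB"
    proof (cases "v = u")
      case False
      then have "v \<in> ?SA" "v \<noteq> f u"
        using v by (auto split: if_splits)
      moreover have "f v \<noteq> u"
        using calculation inv[of v] by auto
      ultimately show ?thesis
        by auto
    qed (use v nfix u in \<open>auto split: if_splits\<close>)
  qed
  then have "card ?SB = card (?SA - {f u}) + card ?U"
    using finSA u by (simp add: card_Un_disjoint)
  moreover have "card (?SA - {f u}) + of_bool (f u \<in> ?SA) = card ?SA"
    using card.remove[OF finSA] by (cases "f u \<in> ?SA") simp_all
  moreover have "f u \<in> ?SA \<longleftrightarrow> u \<notin> T \<and> f u \<in> A"
    using Tc[of u] inv[of u] u by auto
  ultimately show ?thesis
    unfolding dangling_def by (auto split: if_splits)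
qed

lemma rtranclp_exit:
  assumes "Q\<^sup>*\<^sup>* w b" "w \<in> A" "b \<notin> A"
  shows "\<exists>a u. a \<in> A \<and> u \<notin> A \<and> Q a u \<and> Q\<^sup>*\<^sup>* w u"
  using assms
proof (induction rule: rtranclp_induct)
  case (step y z)
  then show ?case
    by (cases "y \<in> A") (auto intro: rtranclp.rtrancl_into_rtrancl)
qed simp

text \<open>The exchange step of Lovasz's proof. \<open>p\<close> and \<open>q\<close> are perfect matchings of \<open>R\<close> plus the
  edge \<open>xz\<close> resp. \<open>yw\<close>, using that edge. Starting at \<open>w\<close> and alternately following \<open>p\<close>-edges other
  than \<open>xz\<close> and \<open>q\<close>-edges other than \<open>yw\<close>, one runs along a path that ends at exactly one of
  \<open>x\<close>, \<open>y\<close>, \<open>z\<close>; switching between \<open>p\<close> and \<open>q\<close> along it gives a perfect matching of \<open>R\<close>.\<close>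

locale lovasz_exchange =
  fixes X :: "'a set" and R :: "'a \<Rightarrow> 'a \<Rightarrow> bool" and p q :: "'a \<Rightarrow> 'a" and x y z w :: 'a
  assumes finX: "finite X"
    and sg: "simple_graph X R"
    and p: "perfect_matching_map X (add_edge R x z) p"
    and q: "perfect_matching_map X (add_edge R y w) q"
    and pxz: "p x = z" and qyw: "q y = w"
    and Rxy: "R x y" and Ryz: "R y z" and nRyw: "\<not> R y w"
    and xX: "x \<in> X" and yX: "y \<in> X" and wX: "w \<in> X" and yw: "y \<noteq> w"
begin

lemma R_sym: "R a b \<Longrightarrow> R b a"
  using sg by (auto simp: simple_graph_def)

lemma distinct_vertices: "x \<noteq> y" "y \<noteq> z" "w \<noteq> x" "w \<noteq> z" "w \<noteq> y"
  using sg Rxy Ryz nRyw R_sym yw by (auto simp: simple_graph_def)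

lemma p_partner: "v \<in> X \<Longrightarrow> p v \<in> X" "v \<in> X \<Longrightarrow> p v \<noteq> v" "v \<in> X \<Longrightarrow> p (p v) = v"
  using p by (auto simp: perfect_matching_map_def)

lemma q_partner: "v \<in> X \<Longrightarrow> q v \<in> X" "v \<in> X \<Longrightarrow> q v \<noteq> v" "v \<in> X \<Longrightarrow> q (q v) = v"
  using q by (auto simp: perfect_matching_map_def)

lemma p_edge: "v \<in> X \<Longrightarrow> v \<notin> {x, z} \<Longrightarrow> R v (p v)"
  using p by (auto simp: perfect_matching_map_def add_edge_def)

lemma q_edge: "v \<in> X \<Longrightarrow> v \<notin> {y, w} \<Longrightarrow> R v (q v)"
  using q by (auto simp: perfect_matching_map_def add_edge_def)

lemma p_xz: "v \<in> X \<Longrightarrow> v \<in> {x, z} \<longleftrightarrow> p v \<in> {x, z}"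
  using pxz p_partner xX by (metis insert_iff singleton_iff)

lemma q_yw: "v \<in> X \<Longrightarrow> v \<in> {y, w} \<longleftrightarrow> q v \<in> {y, w}"
  using qyw q_partner yX by (metis insert_iff singleton_iff)

definition alt_step :: "'a \<Rightarrow> 'a \<Rightarrow> bool" where
  "alt_step a b \<longleftrightarrow> a \<in> X \<and> ((a \<notin> {x, z} \<and> b = p a) \<or> (a \<notin> {y, w} \<and> b = q a))"

definition reach :: "'a set" where
  "reach = {u. alt_step\<^sup>*\<^sup>* w u}"

lemma w_reach: "w \<in> reach"
  by (simp add: reach_def)

lemma reach_subset: "reach \<subseteq> X"
proof
  fix u assume "u \<in> reach"
  then have "alt_step\<^sup>*\<^sup>* w u"
    by (simp add: reach_def)
  then show "u \<in> X"
    by (induction rule: rtranclp_induct) (auto simp: alt_step_def wX p_partner q_partner)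
qed

lemma finite_reach: "finite reach"
  using reach_subset finX by (rule finite_subset)

lemma reach_p:
  assumes "a \<in> reach" "a \<notin> {x, z}"
  shows "p a \<in> reach"
proof -
  have "alt_step a (p a)"
    using assms reach_subset by (auto simp: alt_step_def)
  then show ?thesis
    using assms(1) unfolding reach_def by (auto intro: rtranclp.rtrancl_into_rtrancl)
qed

lemma reach_q:
  assumes "a \<in> reach" "a \<notin> {y, w}"
  shows "q a \<in> reach"
proof -
  have "alt_step a (q a)"
    using assms reach_subset by (auto simp: alt_step_def)
  then show ?thesis
    using assms(1) unfolding reach_def by (auto intro: rtranclp.rtrancl_into_rtrancl)
qed

lemma not_reach_q: "a \<in> X \<Longrightarrow> a \<notin> reach \<Longrightarrow> a \<notin> {y, w} \<Longrightarrow> q a \<notin> reach"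
  using reach_q q_yw q_partner by metis

text \<open>The weight of the part already walked counts its dangling \<open>p\<close>- and \<open>q\<close>-edges together with
  the end vertices \<open>x\<close>, \<open>y\<close>, \<open>z\<close> it contains; one step of the walk changes it by an even amount
  and never increases it beyond \<open>1\<close>.\<close>

definition weight :: "'a set \<Rightarrow> nat" where
  "weight A = dangling p {x, z} A + dangling q {y, w} A + card (A \<inter> {x, y, z})"

definition walked :: "'a set \<Rightarrow> bool" where
  "walked A \<longleftrightarrow> w \<in> A \<and> A \<subseteq> reach \<and> weight A = 1"

lemma walked_start: "walked {w}"
proof -
  have "{v \<in> {w}. v \<notin> {x, z} \<and> p v \<notin> {w}} = {w}"
    using distinct_vertices p_partner wX by auto
  then show ?thesis
    using distinct_vertices by (auto simp: walked_def weight_def dangling_def w_reach)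
qed

lemma weight_insert:
  assumes AX: "A \<subseteq> X" and uX: "u \<in> X" and u: "u \<notin> A" "u \<noteq> w"
  shows "int (weight (insert u A)) = int (weight A) + 2
    - 2 * (of_bool (u \<notin> {x, z} \<and> p u \<in> A) + of_bool (u \<notin> {y, w} \<and> q u \<in> A))"
proof -
  have finA: "finite A"
    using AX finX by (rule finite_subset)
  have hp: "int (dangling p {x, z} (insert u A)) + of_bool (u \<notin> {x, z} \<and> p u \<in> A)
      = int (dangling p {x, z} A) + of_bool (u \<notin> {x, z} \<and> p u \<notin> A)"
  proof (rule dangling_insert[OF finA u(1)])
    show "p (p v) = v" "v \<in> {x, z} \<longleftrightarrow> p v \<in> {x, z}" if "v \<in> insert u A" for v
      using that AX uX p_partner p_xz by blast+
    show "p u \<noteq> u"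
      using p_partner(2)[OF uX] .
  qed
  have hq: "int (dangling q {y, w} (insert u A)) + of_bool (u \<notin> {y, w} \<and> q u \<in> A)
      = int (dangling q {y, w} A) + of_bool (u \<notin> {y, w} \<and> q u \<notin> A)"
  proof (rule dangling_insert[OF finA u(1)])
    show "q (q v) = v" "v \<in> {y, w} \<longleftrightarrow> q v \<in> {y, w}" if "v \<in> insert u A" for v
      using that AX uX q_partner q_yw by blast+
    show "q u \<noteq> u"
      using q_partner(2)[OF uX] .
  qed
  have "insert u A \<inter> {x, y, z} = (if u \<in> {x, y, z} then insert u (A \<inter> {x, y, z}) else A \<inter> {x, y, z})"
    by auto
  then have "int (card (insert u A \<inter> {x, y, z}))
      = int (card (A \<inter> {x, y, z})) + of_bool (u \<in> {x, z}) + of_bool (u = y)"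
    using u distinct_vertices finA by (auto simp: card_insert_if)
  then show ?thesis
    using hp hq u(2) unfolding weight_def by (auto split: if_splits)
qed

lemma walked_step:
  assumes walked: "walked A" and a: "a \<in> A" and u: "u \<notin> A" and step: "alt_step a u"
    and u_reach: "u \<in> reach"
  shows "walked (insert u A)"
proof -
  have AX: "A \<subseteq> X" and uX: "u \<in> X" and aX: "a \<in> X"
    using walked reach_subset u_reach a by (auto simp: walked_def)
  have "u \<noteq> w"
    using walked u by (auto simp: walked_def)
  have returns: "(u \<notin> {x, z} \<and> p u \<in> A) \<or> (u \<notin> {y, w} \<and> q u \<in> A)"
    using step unfolding alt_step_def
  proof (elim conjE disjE)
    assume "a \<notin> {x, z}" "u = p a"
    then show ?thesis
      using p_xz[OF aX] p_partner[OF aX] a by auto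
  next
    assume "a \<notin> {y, w}" "u = q a"
    then show ?thesis
      using q_yw[OF aX] q_partner[OF aX] a by auto
  qed
  have "int (weight A) = 1"
    using walked by (simp add: walked_def)
  then have "int (weight (insert u A)) \<in> {-1, 1}"
    using weight_insert[OF AX uX u \<open>u \<noteq> w\<close>] returns by auto
  then have "weight (insert u A) = 1"
    by auto
  then show ?thesis
    using walked u_reach by (auto simp: walked_def)
qed

lemma walked_reach: "walked reach"
proof -
  have "walked A \<Longrightarrow> walked reach" for A
  proof (induction "card (reach - A)" arbitrary: A rule: less_induct)
    case less
    show ?case
    proof (cases "reach \<subseteq> A")
      case True
      then have "A = reach"
        using less.prems by (auto simp: walked_def)
      then show ?thesis
        using less.prems by simp
    next
      case False
      then obtain b where b: "b \<in> reach" "b \<notin> A"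
        by auto
      have "alt_step\<^sup>*\<^sup>* w b" "w \<in> A"
        using b less.prems by (simp_all add: reach_def walked_def)
      then obtain a u where au: "a \<in> A" "u \<notin> A" "alt_step a u" "alt_step\<^sup>*\<^sup>* w u"
        using rtranclp_exit[OF _ _ b(2)] by blast
      have u_reach: "u \<in> reach"
        using au(4) by (simp add: reach_def)
      have "finite (reach - A)"
        using finite_reach by simp
      then have "card ((reach - A) - {u}) < card (reach - A)"
        using au(2) u_reach by (intro card_Diff1_less) auto
      then have "card (reach - insert u A) < card (reach - A)"
        by (simp only: Diff_insert[of reach u A])
      then show ?thesis
        by (rule less.hyps[OF _ walked_step[OF less.prems au(1-3) u_reach]])
    qed
  qed
  then show ?thesis
    using walked_start by blast
qed

lemma reach_ends: "\<exists>t. reach \<inter> {x, y, z} = {t}"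
proof -
  have "{v \<in> reach. v \<notin> {x, z} \<and> p v \<notin> reach} = {}" "{v \<in> reach. v \<notin> {y, w} \<and> q v \<notin> reach} = {}"
    using reach_p reach_q by blast+
  then have "weight reach = card (reach \<inter> {x, y, z})"
    unfolding weight_def dangling_def by (simp only: card.empty add_0)
  then have "card (reach \<inter> {x, y, z}) = 1"
    using walked_reach by (simp add: walked_def)
  then show ?thesis
    by (rule card_1_singletonE) blast
qed

lemma perfect_matching_map_if_y_reached:
  assumes "y \<in> reach"
  shows "\<exists>r. perfect_matching_map X R r"
proof -
  obtain t where "reach \<inter> {x, y, z} = {t}"
    using reach_ends by blast
  moreover have "y \<in> reach \<inter> {x, y, z}"
    using assms by blast
  ultimately have ends: "reach \<inter> {x, y, z} = {y}"
    by auto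
  have xz_reach: "a \<notin> {x, z}" if "a \<in> reach" for a
  proof
    assume xz: "a \<in> {x, z}"
    then have "a \<in> reach \<inter> {x, y, z}"
      using that by blast
    then have "a = y"
      using ends by simp
    then show False
      using xz distinct_vertices by auto
  qed
  have "perfect_matching_map reach R p"
  proof (intro perfect_matching_map_restrict[OF p reach_subset])
    fix a assume a: "a \<in> reach"
    then show "p a \<in> reach \<and> R a (p a)"
      using reach_p[OF a xz_reach[OF a]] p_edge[OF _ xz_reach[OF a]] reach_subset by auto
  qed
  moreover have "perfect_matching_map (X - reach) R q"
  proof (intro perfect_matching_map_restrict[OF q])
    fix a assume a: "a \<in> X - reach"
    then have "a \<notin> {y, w}"
      using assms w_reach by auto
    then show "q a \<in> X - reach \<and> R a (q a)"
      using a not_reach_q[of a] q_partner(1)[of a] q_edge[of a] by auto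
  qed auto
  moreover have "reach \<inter> (X - reach) = {}"
    by auto
  ultimately have "\<exists>r. perfect_matching_map (reach \<union> (X - reach)) R r"
    by (rule perfect_matching_map_Un)
  moreover have "reach \<union> (X - reach) = X"
    using reach_subset by auto
  ultimately show ?thesis
    by simp
qed

lemma perfect_matching_map_if_y_not_reached:
  assumes "y \<notin> reach"
  shows "\<exists>r. perfect_matching_map X R r"
proof -
  obtain t where t: "reach \<inter> {x, y, z} = {t}"
    using reach_ends by blast
  then have txz: "t \<in> {x, z}" and t_reach: "t \<in> reach"
    using assms by auto
  have tX: "t \<in> X"
    using t_reach reach_subset by auto
  have "p t \<in> {x, z}"
    using p_xz[OF tX] txz by blast
  then have pt: "p t \<notin> reach"
    using t p_partner(2)[OF tX] by blast
  have "perfect_matching_map (reach - {t}) R p"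
  proof (intro perfect_matching_map_restrict[OF p])
    fix a assume a: "a \<in> reach - {t}"
    then have "a \<notin> {x, z}"
      using t by auto
    moreover have "p a \<noteq> t"
      using a pt p_partner(3) reach_subset by (metis DiffD1 subsetD)
    ultimately show "p a \<in> reach - {t} \<and> R a (p a)"
      using a reach_p p_edge reach_subset by auto
  qed (use reach_subset in auto)
  moreover have "perfect_matching_map (X - reach - {y}) R q"
  proof (intro perfect_matching_map_restrict[OF q])
    fix a assume a: "a \<in> X - reach - {y}"
    then have "a \<notin> {y, w}"
      using w_reach by auto
    moreover have "q a \<noteq> y"
      using a qyw q_partner(3) calculation by (metis DiffD1 insertCI)
    ultimately show "q a \<in> X - reach - {y} \<and> R a (q a)"
      using a not_reach_q q_partner q_edge by auto
  qed auto
  ultimately obtain r where r: "perfect_matching_map ((reach - {t}) \<union> (X - reach - {y})) R r"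
    using perfect_matching_map_Un by blast
  have "perfect_matching_map {t, y} R (\<lambda>v. if v = t then y else t)"
    using txz Rxy Ryz R_sym assms t_reach by (auto simp: perfect_matching_map_def)
  then obtain r' where "perfect_matching_map ((reach - {t}) \<union> (X - reach - {y}) \<union> {t, y}) R r'"
    using perfect_matching_map_Un[OF r] t_reach assms by blast
  moreover have "(reach - {t}) \<union> (X - reach - {y}) \<union> {t, y} = X"
    using reach_subset tX yX by blast
  ultimately show ?thesis
    by auto
qed

lemma perfect_matching_map_exchange: "\<exists>r. perfect_matching_map X R r"
  using perfect_matching_map_if_y_reached perfect_matching_map_if_y_not_reached by blast

end

lemma perfect_matching_map_avoiding_edge:
  assumes "perfect_matching_map X (add_edge R a b) p" "p a \<noteq> b"
  shows "perfect_matching_map X R p"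
  unfolding perfect_matching_map_def
proof
  fix v assume v: "v \<in> X"
  then have "p v \<in> X" "p v \<noteq> v" "p (p v) = v" "add_edge R a b v (p v)"
    using assms(1) by (auto simp: perfect_matching_map_def)
  moreover have "\<not> (v = b \<and> p v = a)"
    using assms(2) calculation(3) by auto
  ultimately show "p v \<in> X \<and> p v \<noteq> v \<and> p (p v) = v \<and> R v (p v)"
    using assms(2) by (auto simp: add_edge_def)
qed

lemma perfect_matching_map_from_two_extensions:
  assumes "finite X" "simple_graph X R"
    and p: "perfect_matching_map X (add_edge R x z) p" and q: "perfect_matching_map X (add_edge R y w) q"
    and "R x y" "R y z" "\<not> R y w" "x \<in> X" "y \<in> X" "w \<in> X" "y \<noteq> w"
  shows "\<exists>r. perfect_matching_map X R r"
proof -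
  consider "p x \<noteq> z" | "q y \<noteq> w" | "p x = z" "q y = w"
    by blast
  then show ?thesis
  proof cases
    case 1
    then show ?thesis
      using perfect_matching_map_avoiding_edge[OF p] by blast
  next
    case 2
    then show ?thesis
      using perfect_matching_map_avoiding_edge[OF q] by blast
  next
    case 3
    interpret lovasz_exchange X R p q x y z w
      by (unfold_locales; fact assms 3)
    show ?thesis
      by (rule perfect_matching_map_exchange)
  qed
qed

definition nonedges :: "'a set \<Rightarrow> ('a \<Rightarrow> 'a \<Rightarrow> bool) \<Rightarrow> ('a \<times> 'a) set" where
  "nonedges X R = {(u, v). u \<in> X \<and> v \<in> X \<and> u \<noteq> v \<and> \<not> R u v}"

lemma tutte_condition_add_edge:
  assumes fin: "finite X" and sg: "simple_graph X R" and tutte: "tutte_condition X R"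
    and a: "a \<in> X" and b: "b \<in> X" and ab: "a \<noteq> b" and nab: "\<not> R a b"
  shows "simple_graph X (add_edge R a b)" "tutte_condition X (add_edge R a b)"
    "card (nonedges X (add_edge R a b)) < card (nonedges X R)"
proof -
  show sg': "simple_graph X (add_edge R a b)"
    using sg a b ab unfolding add_edge_def simple_graph_def by auto
  show "tutte_condition X (add_edge R a b)"
    unfolding tutte_condition_def
  proof (intro allI impI)
    fix S assume S: "S \<subseteq> X"
    have "card (odd_components (X - S) (add_edge R a b)) \<le> card (odd_components (X - S) R)"
      using fin simple_graph_symp[OF sg] simple_graph_symp[OF sg']
      by (intro card_odd_components_antimono) (auto simp: add_edge_def)
    also have "\<dots> \<le> card S"
      using tutte S by (simp add: tutte_condition_def)
    finally show "card (odd_components (X - S) (add_edge R a b)) \<le> card S" .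
  qed
  have "nonedges X R \<subseteq> X \<times> X"
    by (auto simp: nonedges_def)
  then have "finite (nonedges X R)"
    using fin by (simp add: finite_subset)
  moreover have "nonedges X (add_edge R a b) \<subset> nonedges X R"
    using a b ab nab by (auto simp: nonedges_def add_edge_def)
  ultimately show "card (nonedges X (add_edge R a b)) < card (nonedges X R)"
    by (rule psubset_card_mono)
qed

text \<open>Lovasz's proof: unless the components of \<open>X\<close> minus the universal vertices are cliques, there
  is a path \<open>a y z\<close> with \<open>az\<close> missing and a non-neighbour \<open>w\<close> of \<open>y\<close>; adding \<open>az\<close> resp. \<open>yw\<close>
  preserves Tutte's condition, and the two resulting perfect matchings can be exchanged.\<close>

theorem tutte_theorem:
  assumes "finite X" "simple_graph X R" "tutte_condition X R"
  shows "\<exists>p. perfect_matching_map X R p"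
  using assms
proof (induction "card (nonedges X R)" arbitrary: R rule: less_induct)
  case less
  note fin = less.prems(1) and sg = less.prems(2) and tutte = less.prems(3)
  have sym: "symp R"
    using sg by (rule simple_graph_symp)
  define S where "S = {v \<in> X. \<forall>u\<in>X. u \<noteq> v \<longrightarrow> R v u}"
  show ?case
  proof (cases "\<forall>C\<in>components (X - S) R. \<forall>a\<in>C. \<forall>b\<in>C. a \<noteq> b \<longrightarrow> R a b")
    case True
    then show ?thesis
      using perfect_matching_map_if_components_complete[OF fin sg tutte S_def] by blast
  next
    case False
    then obtain C a b where C: "C \<in> components (X - S) R" and abC: "a \<in> C" "b \<in> C"
      and ab: "a \<noteq> b" "\<not> R a b"
      by blast
    have "b \<in> component (X - S) R a"
      using components_eq_component[OF sym C abC(1)] abC(2) by simp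
    then have path: "(induced (X - S) R)\<^sup>*\<^sup>* a b"
      by (simp add: component_def)
    obtain y z where yz: "R a y" "R y z" "\<not> R a z" "z \<noteq> a" "y \<in> X - S" "z \<in> X - S"
      using induced_path_in_component[OF path ab(2,1)] by blast
    then obtain w where w: "w \<in> X" "w \<noteq> y" "\<not> R y w"
      by (auto simp: S_def)
    have aX: "a \<in> X"
      using abC components_subset[OF C] by blast
    have zX: "z \<in> X" and yX: "y \<in> X"
      using yz by auto
    note az = tutte_condition_add_edge[OF fin sg tutte aX zX yz(4)[symmetric] yz(3)]
    note yw = tutte_condition_add_edge[OF fin sg tutte yX w(1) w(2)[symmetric] w(3)]
    obtain p where "perfect_matching_map X (add_edge R a z) p"
      using less.hyps[OF az(3) fin az(1,2)] by blast
    moreover obtain q where "perfect_matching_map X (add_edge R y w) q"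
      using less.hyps[OF yw(3) fin yw(1,2)] by blast
    ultimately show ?thesis
      by (rule perfect_matching_map_from_two_extensions[OF fin sg _ _ yz(1,2) w(3) aX yX w(1)
            w(2)[symmetric]])
  qed
qed

section \<open>Perfect matchings of countable graphs\<close>

definition neighbours :: "('a \<Rightarrow> 'a \<Rightarrow> bool) \<Rightarrow> 'a \<Rightarrow> 'a set" where
  "neighbours E v = {u. E v u \<and> u \<noteq> v}"

definition matching :: "('a \<Rightarrow> 'a \<Rightarrow> bool) \<Rightarrow> 'a set set \<Rightarrow> bool" where
  "matching E M \<longleftrightarrow> (\<forall>e\<in>M. \<exists>u v. e = {u, v} \<and> u \<noteq> v \<and> E u v) \<and>
     (\<forall>e1\<in>M. \<forall>e2\<in>M. e1 \<noteq> e2 \<longrightarrow> e1 \<inter> e2 = {})"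

definition covers :: "'a set set \<Rightarrow> 'a set \<Rightarrow> bool" where
  "covers M F \<longleftrightarrow> (\<forall>v\<in>F. \<exists>e\<in>M. v \<in> e)"

lemma perfect_matching_iff: "perfect_matching V E M \<longleftrightarrow> matching E M \<and> covers M V"
  unfolding perfect_matching_def matching_def covers_def by (simp only: conj_assoc)

lemma matching_subset: "matching E M \<Longrightarrow> P \<subseteq> M \<Longrightarrow> matching E P"
  unfolding matching_def by (meson subsetD)

lemma matching_UN_increasing:
  fixes Ms :: "nat \<Rightarrow> 'a set set"
  assumes matching: "\<And>n. matching E (Ms n)" and mono: "\<And>m n. m \<le> n \<Longrightarrow> Ms m \<subseteq> Ms n"
  shows "matching E (\<Union>n. Ms n)"
  unfolding matching_def
proof (intro conjI ballI impI)
  fix e assume "e \<in> (\<Union>n. Ms n)"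
  then show "\<exists>u v. e = {u, v} \<and> u \<noteq> v \<and> E u v"
    using matching by (auto simp: matching_def)
next
  fix e1 e2 assume "e1 \<in> (\<Union>n. Ms n)" "e2 \<in> (\<Union>n. Ms n)" "e1 \<noteq> e2"
  then obtain m n where "e1 \<in> Ms m" "e2 \<in> Ms n"
    by auto
  moreover have "Ms m \<subseteq> Ms (max m n)" "Ms n \<subseteq> Ms (max m n)"
    by (simp_all add: mono)
  ultimately have "e1 \<in> Ms (max m n)" "e2 \<in> Ms (max m n)"
    by blast+
  then show "e1 \<inter> e2 = {}"
    using matching[of "max m n"] \<open>e1 \<noteq> e2\<close> by (auto simp: matching_def)
qed

lemma perfect_matching_of_chain:
  assumes "countable V" and "Q {}"
    and extend: "\<And>P v. Q P \<Longrightarrow> v \<in> V \<Longrightarrow> \<exists>P'. Q P' \<and> P \<subseteq> P' \<and> (\<exists>e\<in>P'. v \<in> e)"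
    and matching: "\<And>P. Q P \<Longrightarrow> matching E P"
  shows "\<exists>M. perfect_matching V E M"
proof (cases "V = {}")
  case True
  then show ?thesis
    by (auto simp: perfect_matching_def)
next
  case False
  define enum where "enum = from_nat_into V"
  have enum: "range enum = V"
    using False assms(1) by (simp add: enum_def)
  define grow where "grow P n = (SOME P'. Q P' \<and> P \<subseteq> P' \<and> (\<exists>e\<in>P'. enum n \<in> e))" for P n
  have grow: "Q (grow P n) \<and> P \<subseteq> grow P n \<and> (\<exists>e\<in>grow P n. enum n \<in> e)" if "Q P" for P n
  proof -
    have "enum n \<in> V"
      using enum rangeI[of enum n] by simp
    then have "\<exists>P'. Q P' \<and> P \<subseteq> P' \<and> (\<exists>e\<in>P'. enum n \<in> e)"
      using extend that by blast
    then show ?thesis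
      unfolding grow_def by (rule someI_ex)
  qed
  define Ms where "Ms n = rec_nat {} (\<lambda>n P. grow P n) n" for n
  have Ms_Suc: "Ms (Suc n) = grow (Ms n) n" for n
    by (simp add: Ms_def)
  have Q: "Q (Ms n)" for n
    by (induction n) (simp_all add: Ms_def assms(2) grow)
  have step: "Ms n \<subseteq> Ms (Suc n)" for n
    using grow[OF Q] by (simp add: Ms_Suc)
  have mono: "Ms m \<subseteq> Ms n" if "m \<le> n" for m n
    using lift_Suc_mono_le[of Ms, OF step that] .
  define M where "M = (\<Union>n. Ms n)"
  have "matching E M"
    unfolding M_def using matching[OF Q] mono by (rule matching_UN_increasing)
  moreover have "covers M V"
    unfolding covers_def
  proof
    fix v assume "v \<in> V"
    have "v \<in> range enum"
      using enum \<open>v \<in> V\<close> by simp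
    then obtain n where "v = enum n"
      by blast
    then show "\<exists>e\<in>M. v \<in> e"
      using grow[OF Q[of n], of n] by (auto simp: M_def Ms_Suc[symmetric])
  qed
  ultimately show ?thesis
    by (auto simp: perfect_matching_iff)
qed

lemma matching_insert:
  assumes "matching E P" "E v u" "u \<noteq> v" "v \<notin> \<Union>P" "u \<notin> \<Union>P"
  shows "matching E (insert {v, u} P)"
  unfolding matching_def
proof (intro conjI ballI impI)
  fix e assume "e \<in> insert {v, u} P"
  then show "\<exists>a b. e = {a, b} \<and> a \<noteq> b \<and> E a b"
    using assms(1-3) unfolding matching_def by auto
next
  fix e1 e2 assume "e1 \<in> insert {v, u} P" "e2 \<in> insert {v, u} P" "e1 \<noteq> e2"
  then show "e1 \<inter> e2 = {}"
    using assms(1,4,5) unfolding matching_def by blast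
qed

lemma perfect_matching_if_infinite_degrees:
  assumes "countable V" and infinite: "\<And>v. v \<in> V \<Longrightarrow> infinite (neighbours E v)"
  shows "\<exists>M. perfect_matching V E M"
proof (rule perfect_matching_of_chain[where Q = "\<lambda>P. finite P \<and> matching E P"])
  show "finite {} \<and> matching E {}"
    by (simp add: matching_def)
  fix P v assume P: "finite P \<and> matching E P" and v: "v \<in> V"
  show "\<exists>P'. (finite P' \<and> matching E P') \<and> P \<subseteq> P' \<and> (\<exists>e\<in>P'. v \<in> e)"
  proof (cases "v \<in> \<Union>P")
    case True
    then have "\<exists>e\<in>P. v \<in> e"
      by blast
    with P show ?thesis
      by (intro exI[of _ P]) simp
  next
    case False
    have "finite e" if "e \<in> P" for e
      using P that by (auto simp: matching_def)
    then have "finite (\<Union>P)"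
      using P by (intro finite_Union) auto
    then have "infinite (neighbours E v - \<Union>P)"
      using infinite[OF v] by (rule Diff_infinite_finite)
    then have "neighbours E v - \<Union>P \<noteq> {}"
      by (metis finite.emptyI)
    then obtain u where u: "u \<in> neighbours E v" "u \<notin> \<Union>P"
      by blast
    then have "matching E (insert {v, u} P)"
      using P False by (intro matching_insert) (auto simp: neighbours_def)
    moreover have "finite (insert {v, u} P)"
      using P by simp
    ultimately show ?thesis
      by (intro exI[of _ "insert {v, u} P"]) auto
  qed
qed (use assms(1) in simp_all)

definition extendable :: "'a set \<Rightarrow> ('a \<Rightarrow> 'a \<Rightarrow> bool) \<Rightarrow> 'a set set \<Rightarrow> bool" where
  "extendable V E P \<longleftrightarrow> (\<forall>F. finite F \<longrightarrow> F \<subseteq> V \<longrightarrow> (\<exists>M. matching E M \<and> P \<subseteq> M \<and> covers M F))"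

text \<open>If every edge at \<open>v\<close> failed on some finite set, a matching extending \<open>P\<close> and covering \<open>v\<close> and
  all these (finitely many) sets would contain one of them.\<close>

lemma extendable_insert_edge:
  assumes "symp E" and P: "extendable V E P" and v: "v \<in> V" and fin: "finite (neighbours E v)"
  shows "\<exists>u. extendable V E (insert {v, u} P)"
proof (rule ccontr)
  define fails where "fails u F \<longleftrightarrow> finite F \<and> F \<subseteq> V \<and>
      \<not> (\<exists>M. matching E M \<and> insert {v, u} P \<subseteq> M \<and> covers M F)" for u F
  assume "\<nexists>u. extendable V E (insert {v, u} P)"
  then have "\<not> extendable V E (insert {v, u} P)" for u
    by blast
  then have "\<exists>F. fails u F" for u
    unfolding extendable_def fails_def by simp
  then have G: "fails u (SOME F. fails u F)" for u
    by (rule someI_ex)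
  define F where "F = insert v (\<Union>u\<in>neighbours E v. SOME F. fails u F)"
  have "finite (SOME F. fails u F)" "(SOME F. fails u F) \<subseteq> V" for u
    using G[of u] by (simp_all add: fails_def)
  then have "finite F" "F \<subseteq> V"
    using fin v by (auto simp: F_def)
  then obtain M where M: "matching E M" "P \<subseteq> M" "covers M F"
    using P unfolding extendable_def by blast
  then obtain e where e: "e \<in> M" "v \<in> e"
    by (auto simp: covers_def F_def)
  then obtain a b where ab: "e = {a, b}" "a \<noteq> b" "E a b"
    using M(1) by (auto simp: matching_def)
  obtain u where u: "e = {v, u}" "u \<in> neighbours E v"
  proof (cases "v = a")
    case True
    then show ?thesis
      using that ab by (simp add: neighbours_def)
  next
    case False
    then have "v = b" "E v a"
      using ab e(2) assms(1) by (auto dest: sympD)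
    then show ?thesis
      using that[of a] ab by (simp add: neighbours_def insert_commute)
  qed
  have "covers M (SOME F. fails u F)"
    using M(3) u(2) by (auto simp: covers_def F_def)
  then show False
    using G[of u] M(1,2) e(1) u(1) by (auto simp: fails_def)
qed

lemma perfect_matching_if_finite_sets_coverable:
  assumes "symp E" "countable V" and fin: "\<And>v. v \<in> V \<Longrightarrow> finite (neighbours E v)"
    and coverable: "\<And>F. finite F \<Longrightarrow> F \<subseteq> V \<Longrightarrow> \<exists>M. matching E M \<and> covers M F"
  shows "\<exists>M. perfect_matching V E M"
proof (rule perfect_matching_of_chain[where Q = "extendable V E"])
  show "extendable V E {}"
    using coverable by (simp add: extendable_def)
  show "matching E P" if "extendable V E P" for P
    using that matching_subset unfolding extendable_def by blast
  show "\<exists>P'. extendable V E P' \<and> P \<subseteq> P' \<and> (\<exists>e\<in>P'. v \<in> e)"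
    if "extendable V E P" "v \<in> V" for P v
    using extendable_insert_edge[OF assms(1) that fin[OF that(2)]] by blast
qed fact

section \<open>Edge boundaries in vertex-transitive graphs\<close>

definition out_neighbours :: "('a \<Rightarrow> 'a \<Rightarrow> bool) \<Rightarrow> 'a \<Rightarrow> 'a set \<Rightarrow> 'a set" where
  "out_neighbours E x K = {u. E x u \<and> u \<notin> K}"

definition edge_boundary :: "('a \<Rightarrow> 'a \<Rightarrow> bool) \<Rightarrow> 'a set \<Rightarrow> ('a \<times> 'a) set" where
  "edge_boundary E K = {(k, u). k \<in> K \<and> u \<notin> K \<and> E k u}"

lemma neighbours_eq_out_neighbours: "neighbours E x = out_neighbours E x {x}"
  by (auto simp: neighbours_def out_neighbours_def)

lemma edge_boundary_eq_Sigma: "edge_boundary E K = Sigma K (\<lambda>k. out_neighbours E k K)"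
  by (auto simp: edge_boundary_def out_neighbours_def)

lemma graph_symp: "graph V E \<Longrightarrow> symp E"
  by (auto simp: graph_def symp_def)

lemma automorphism_image_out_neighbours:
  assumes g: "graph V E" and f: "graph_automorphism V E f" and x: "x \<in> V" and K: "K \<subseteq> V"
  shows "f ` out_neighbours E x K = out_neighbours E (f x) (f ` K)"
proof -
  have bij: "bij_betw f V V" and E: "\<And>u v. u \<in> V \<Longrightarrow> v \<in> V \<Longrightarrow> E (f u) (f v) \<longleftrightarrow> E u v"
    using f by (auto simp: graph_automorphism_def)
  have EV: "\<And>a b. E a b \<Longrightarrow> b \<in> V"
    using g by (auto simp: graph_def)
  have K_iff: "f u \<in> f ` K \<longleftrightarrow> u \<in> K" if "u \<in> V" for u
    using inj_on_image_mem_iff[OF bij_betw_imp_inj_on[OF bij] that K] .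
  show ?thesis
  proof
    show "f ` out_neighbours E x K \<subseteq> out_neighbours E (f x) (f ` K)"
    proof
      fix t assume "t \<in> f ` out_neighbours E x K"
      then obtain u where u: "E x u" "u \<notin> K" "t = f u"
        by (auto simp: out_neighbours_def)
      then show "t \<in> out_neighbours E (f x) (f ` K)"
        using E[OF x EV[OF u(1)]] K_iff[OF EV[OF u(1)]] by (simp add: out_neighbours_def)
    qed
    show "out_neighbours E (f x) (f ` K) \<subseteq> f ` out_neighbours E x K"
    proof
      fix t assume t: "t \<in> out_neighbours E (f x) (f ` K)"
      then have "t \<in> V"
        using EV by (auto simp: out_neighbours_def)
      then obtain u where u: "u \<in> V" "t = f u"
        using bij by (metis bij_betw_imp_surj_on imageE)
      then show "t \<in> f ` out_neighbours E x K"
        using t E[OF x u(1)] K_iff[OF u(1)] by (auto simp: out_neighbours_def)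
    qed
  qed
qed

lemma card_out_neighbours_automorphism:
  assumes g: "graph V E" and f: "graph_automorphism V E f" and x: "x \<in> V" and K: "K \<subseteq> V"
  shows "card (out_neighbours E (f x) (f ` K)) = card (out_neighbours E x K)"
    "finite (out_neighbours E (f x) (f ` K)) \<longleftrightarrow> finite (out_neighbours E x K)"
proof -
  have "out_neighbours E x K \<subseteq> V"
    using g by (auto simp: graph_def out_neighbours_def)
  moreover have "inj_on f V"
    using f by (auto simp: graph_automorphism_def bij_betw_def)
  ultimately have inj: "inj_on f (out_neighbours E x K)"
    by (rule inj_on_subset[rotated])
  show "card (out_neighbours E (f x) (f ` K)) = card (out_neighbours E x K)"
    using card_image[OF inj] automorphism_image_out_neighbours[OF assms] by simp
  show "finite (out_neighbours E (f x) (f ` K)) \<longleftrightarrow> finite (out_neighbours E x K)"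
    using finite_image_iff[OF inj] automorphism_image_out_neighbours[OF assms] by simp
qed

lemma automorphism_neighbours:
  assumes "graph V E" "graph_automorphism V E f" "x \<in> V"
  shows "card (neighbours E (f x)) = card (neighbours E x)"
    "finite (neighbours E (f x)) \<longleftrightarrow> finite (neighbours E x)"
  using card_out_neighbours_automorphism[OF assms, of "{x}"] assms(3)
  by (simp_all add: neighbours_eq_out_neighbours)

lemma vertex_transitive_neighbours:
  assumes "graph V E" "vertex_transitive V E" "v \<in> V" "x \<in> V"
  shows "card (neighbours E x) = card (neighbours E v)"
    "finite (neighbours E x) \<longleftrightarrow> finite (neighbours E v)"
proof -
  have "\<exists>f. graph_automorphism V E f \<and> f v = x"
    using assms(2-4) by (simp add: vertex_transitive_def)
  then obtain f where f: "graph_automorphism V E f" "f v = x"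
    by blast
  show "card (neighbours E x) = card (neighbours E v)"
    "finite (neighbours E x) \<longleftrightarrow> finite (neighbours E v)"
    using automorphism_neighbours[OF assms(1) f(1) assms(3)] f(2) by simp_all
qed

lemma connected_graph_exit:
  assumes "connected_graph V E" "K \<subseteq> V" "a \<in> K" "v \<in> V" "v \<notin> K"
  shows "\<exists>x\<in>K. out_neighbours E x K \<noteq> {}"
proof -
  have "E\<^sup>*\<^sup>* a v"
    using assms by (auto simp: connected_graph_def)
  then obtain x u where "x \<in> K" "u \<notin> K" "E x u"
    using rtranclp_exit assms(3,5) by metis
  then show ?thesis
    by (auto simp: out_neighbours_def)
qed

locale locally_finite_vertex_transitive =
  fixes V :: "'a set" and E :: "'a \<Rightarrow> 'a \<Rightarrow> bool" and d :: nat
  assumes graph: "graph V E" and connected: "connected_graph V E"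
    and transitive: "vertex_transitive V E" and infinite: "infinite V"
    and finite_neighbours: "\<And>v. v \<in> V \<Longrightarrow> finite (neighbours E v)"
    and degree: "\<And>v. v \<in> V \<Longrightarrow> card (neighbours E v) = d"
begin

lemma edge_in_V: "E a b \<Longrightarrow> a \<in> V \<and> b \<in> V"
  using graph by (auto simp: graph_def)

lemma finite_out_neighbours:
  assumes "x \<in> V"
  shows "finite (out_neighbours E x K)"
proof (rule finite_subset)
  show "out_neighbours E x K \<subseteq> insert x (neighbours E x)"
    by (auto simp: neighbours_def out_neighbours_def)
  show "finite (insert x (neighbours E x))"
    using finite_neighbours[OF assms] by simp
qed

lemma degree_pos: "d > 0"
proof -
  obtain v where v: "v \<in> V"
    using infinite by fastforce
  have "V \<noteq> {v}"
    using infinite by auto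
  then obtain u where "u \<in> V" "u \<noteq> v"
    using v by blast
  then have "neighbours E v \<noteq> {}"
    using connected_graph_exit[OF connected _ _ \<open>u \<in> V\<close>, of "{v}"] v
    by (auto simp: neighbours_eq_out_neighbours)
  then show ?thesis
    using degree[OF v] finite_neighbours[OF v] card_gt_0_iff by metis
qed

definition piece :: "'a set \<Rightarrow> bool" where
  "piece K \<longleftrightarrow> finite K \<and> K \<noteq> {} \<and> K \<subseteq> V"

lemma finite_edge_boundary: "piece K \<Longrightarrow> finite (edge_boundary E K)"
  unfolding edge_boundary_eq_Sigma piece_def using finite_out_neighbours by (intro finite_SigmaI) auto

lemma card_edge_boundary_Int_Un:
  assumes "piece A" "piece B"
  shows "card (edge_boundary E (A \<inter> B)) + card (edge_boundary E (A \<union> B))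
    \<le> card (edge_boundary E A) + card (edge_boundary E B)"
proof -
  let ?I = "edge_boundary E (A \<inter> B)" and ?U = "edge_boundary E (A \<union> B)"
  have fin: "finite (edge_boundary E A)" "finite (edge_boundary E B)"
    using assms by (simp_all add: finite_edge_boundary)
  have sub: "?I \<union> ?U \<subseteq> edge_boundary E A \<union> edge_boundary E B"
    "?I \<inter> ?U \<subseteq> edge_boundary E A \<inter> edge_boundary E B"
    by (auto simp: edge_boundary_def)
  then have "finite ?I" "finite ?U"
    using fin by (meson finite_Un finite_subset le_supE)+
  then have "card ?I + card ?U = card (?I \<union> ?U) + card (?I \<inter> ?U)"
    by (rule card_Un_Int)
  also have "\<dots> \<le> card (edge_boundary E A \<union> edge_boundary E B) + card (edge_boundary E A \<inter> edge_boundary E B)"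
    using sub fin by (intro add_mono card_mono) auto
  also have "\<dots> = card (edge_boundary E A) + card (edge_boundary E B)"
    using card_Un_Int[OF fin] by simp
  finally show ?thesis .
qed

lemma card_edge_boundary_automorphism:
  assumes f: "graph_automorphism V E f" and K: "piece K"
  shows "card (edge_boundary E (f ` K)) = card (edge_boundary E K)"
proof -
  have KV: "K \<subseteq> V" and finK: "finite K"
    using K by (auto simp: piece_def)
  have inj: "inj_on f K"
    using f KV by (auto simp: graph_automorphism_def bij_betw_def intro: inj_on_subset)
  have fKV: "f ` K \<subseteq> V"
    using f KV by (auto simp: graph_automorphism_def bij_betw_def)
  have "card (edge_boundary E (f ` K)) = (\<Sum>k\<in>f ` K. card (out_neighbours E k (f ` K)))"
    unfolding edge_boundary_eq_Sigma using finK fKV finite_out_neighbours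
    by (intro card_SigmaI) auto
  also have "\<dots> = (\<Sum>k\<in>K. card (out_neighbours E (f k) (f ` K)))"
    using inj by (rule sum.reindex[unfolded comp_def])
  also have "\<dots> = (\<Sum>k\<in>K. card (out_neighbours E k K))"
    using card_out_neighbours_automorphism(1)[OF graph f _ KV] KV by (intro sum.cong) auto
  also have "\<dots> = card (edge_boundary E K)"
    unfolding edge_boundary_eq_Sigma using finK KV finite_out_neighbours
    by (intro card_SigmaI[symmetric]) auto
  finally show ?thesis .
qed

definition edge_connectivity :: nat where
  "edge_connectivity = (LEAST n. \<exists>K. piece K \<and> card (edge_boundary E K) = n)"

lemma edge_connectivity_attained: "\<exists>K. piece K \<and> card (edge_boundary E K) = edge_connectivity"
proof -
  obtain v where "v \<in> V"
    using infinite by fastforce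
  then have "piece {v}"
    by (simp add: piece_def)
  then have "\<exists>n K. piece K \<and> card (edge_boundary E K) = n"
    by blast
  then show ?thesis
    unfolding edge_connectivity_def by (rule LeastI2_ex) blast
qed

lemma edge_connectivity_le: "piece K \<Longrightarrow> edge_connectivity \<le> card (edge_boundary E K)"
  unfolding edge_connectivity_def by (rule Least_le) blast

definition atom_size :: nat where
  "atom_size = (LEAST m. \<exists>A. piece A \<and> card (edge_boundary E A) = edge_connectivity \<and> card A = m)"

definition atom :: "'a set \<Rightarrow> bool" where
  "atom A \<longleftrightarrow> piece A \<and> card (edge_boundary E A) = edge_connectivity \<and> card A = atom_size"

lemma atom_exists: "\<exists>A. atom A"
proof -
  have "\<exists>m A. piece A \<and> card (edge_boundary E A) = edge_connectivity \<and> card A = m"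
    using edge_connectivity_attained by blast
  then show ?thesis
    unfolding atom_def atom_size_def by (rule LeastI2_ex) blast
qed

lemma atom_size_le: "piece A \<Longrightarrow> card (edge_boundary E A) = edge_connectivity \<Longrightarrow> atom_size \<le> card A"
  unfolding atom_size_def by (rule Least_le) blast

lemma atoms_eq:
  assumes A: "atom A" and B: "atom B" and AB: "A \<inter> B \<noteq> {}"
  shows "A = B"
proof -
  have "piece A" "piece B"
    using A B by (auto simp: atom_def)
  then have pieces: "piece (A \<inter> B)" "piece (A \<union> B)" and fin: "finite A" "finite B"
    using AB by (auto simp: piece_def)
  have "card (edge_boundary E (A \<inter> B)) + card (edge_boundary E (A \<union> B))
      \<le> edge_connectivity + edge_connectivity"
    using card_edge_boundary_Int_Un[OF \<open>piece A\<close> \<open>piece B\<close>] A B by (simp add: atom_def)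
  then have "card (edge_boundary E (A \<inter> B)) = edge_connectivity"
    using edge_connectivity_le[OF pieces(1)] edge_connectivity_le[OF pieces(2)] by linarith
  then have "atom_size \<le> card (A \<inter> B)"
    by (rule atom_size_le[OF pieces(1)])
  then have "card (A \<inter> B) = card A" "card (A \<inter> B) = card B"
    using A B card_mono[OF fin(1), of "A \<inter> B"] card_mono[OF fin(2), of "A \<inter> B"]
    by (auto simp: atom_def)
  then have "A \<inter> B = A" "A \<inter> B = B"
    using card_subset_eq[OF fin(1), of "A \<inter> B"] card_subset_eq[OF fin(2), of "A \<inter> B"] by auto
  then show ?thesis
    by simp
qed

lemma atom_automorphism:
  assumes A: "atom A" and f: "graph_automorphism V E f"
  shows "atom (f ` A)"
proof -
  have "piece A"
    using A by (simp add: atom_def)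
  then have "inj_on f A" "f ` A \<subseteq> V"
    using f by (auto simp: graph_automorphism_def bij_betw_def piece_def intro: inj_on_subset)
  then have "piece (f ` A)" "card (f ` A) = card A"
    using \<open>piece A\<close> by (auto simp: piece_def card_image)
  then show ?thesis
    using A card_edge_boundary_automorphism[OF f \<open>piece A\<close>] by (simp add: atom_def)
qed

text \<open>Distinct atoms are disjoint and automorphisms permute atoms, so an automorphism moving one
  vertex of an atom to another fixes the atom.\<close>

lemma card_out_neighbours_atom:
  assumes A: "atom A" and x: "x \<in> A" and y: "y \<in> A"
  shows "card (out_neighbours E x A) = card (out_neighbours E y A)"
proof -
  have AV: "A \<subseteq> V"
    using A by (simp add: atom_def piece_def)
  have "x \<in> V" "y \<in> V"
    using x y AV by auto
  then obtain f where f: "graph_automorphism V E f" "f x = y"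
    using transitive unfolding vertex_transitive_def by blast
  have "f ` A = A"
    using atoms_eq[OF atom_automorphism[OF A f(1)] A] f(2) x y by blast
  then show ?thesis
    using card_out_neighbours_automorphism(1)[OF graph f(1) _ AV] x AV f(2) by auto
qed

theorem degree_le_edge_boundary:
  assumes K: "piece K"
  shows "d \<le> card (edge_boundary E K)"
proof -
  obtain A where A: "atom A"
    using atom_exists by blast
  then have finA: "finite A" and AV: "A \<subseteq> V" and "A \<noteq> {}"
    by (auto simp: atom_def piece_def)
  then obtain a where a: "a \<in> A"
    by blast
  define r where "r = card (out_neighbours E a A)"
  have r: "card (out_neighbours E x A) = r" if "x \<in> A" for x
    using card_out_neighbours_atom[OF A that a] by (simp add: r_def)
  have "card (edge_boundary E A) = r * card A"
    unfolding edge_boundary_eq_Sigma using finA AV finite_out_neighbours r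
    by (subst card_SigmaI) auto
  moreover have "card (edge_boundary E A) = edge_connectivity"
    using A by (simp add: atom_def)
  ultimately have bound: "r * card A = edge_connectivity"
    by simp
  obtain v where "v \<in> V" "v \<notin> A"
    using infinite finA AV by (metis finite_subset subsetI)
  then obtain x where "x \<in> A" "out_neighbours E x A \<noteq> {}"
    using connected_graph_exit[OF connected AV a] by blast
  then have "r > 0"
    using r finite_out_neighbours AV by (metis card_gt_0_iff subsetD)
  have "neighbours E a \<subseteq> out_neighbours E a A \<union> (A - {a})"
    by (auto simp: neighbours_def out_neighbours_def)
  then have "card (neighbours E a) \<le> card (out_neighbours E a A) + card (A - {a})"
    using card_mono[OF _ \<open>neighbours E a \<subseteq> _\<close>] card_Un_le finite_out_neighbours a AV finA
    by (meson finite_Diff finite_UnI le_trans subsetD)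
  then have "d \<le> r + (card A - 1)"
    using degree a AV finA by (auto simp: r_def)
  also have "\<dots> \<le> r * card A"
    using \<open>r > 0\<close> a finA by (cases "card A") (auto simp: card_gt_0_iff)
  also have "\<dots> \<le> card (edge_boundary E K)"
    using bound edge_connectivity_le[OF K] by simp
  finally show ?thesis .
qed

end

section \<open>Matchings covering a finite set\<close>

definition local_graph :: "'a set \<Rightarrow> 'a set \<Rightarrow> ('a \<Rightarrow> 'a \<Rightarrow> bool) \<Rightarrow> 'a \<Rightarrow> 'a \<Rightarrow> bool" where
  "local_graph X F E u v \<longleftrightarrow>
     u \<in> X \<and> v \<in> X \<and> u \<noteq> v \<and> ((E u v \<and> (u \<in> F \<or> v \<in> F)) \<or> (u \<notin> F \<and> v \<notin> F))"

lemma simple_graph_local_graph: "symp E \<Longrightarrow> simple_graph X (local_graph X F E)"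
  unfolding simple_graph_def local_graph_def by (blast dest: sympD)

lemma card_components_not_within_le_1:
  assumes "symp E" "finite X"
  shows "card {C \<in> components (X - S) (local_graph X F E). \<not> C \<subseteq> F} \<le> 1"
proof -
  let ?R = "local_graph X F E"
  have sym: "symp ?R"
    using simple_graph_symp[OF simple_graph_local_graph[OF assms(1)]] .
  have same: "C1 = C2" if C: "C1 \<in> components (X - S) ?R" "C2 \<in> components (X - S) ?R" and a: "a \<in> C1" "a \<notin> F"
    and b: "b \<in> C2" "b \<notin> F" for C1 C2 a b
  proof -
    have "a \<in> X - S" "b \<in> X - S"
      using a b C components_subset by blast+
    have "b \<in> component (X - S) ?R a"
    proof (cases "a = b")
      case True
      then show ?thesis
        using \<open>a \<in> X - S\<close> by (simp add: self_in_component)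
    next
      case False
      then have "induced (X - S) ?R a b"
        using False a b \<open>a \<in> X - S\<close> \<open>b \<in> X - S\<close> by (simp add: induced_def local_graph_def)
      then show ?thesis
        by (simp add: component_def)
    qed
    then show ?thesis
      using components_eq_component[OF sym C(1) a(1)] components_eq_component[OF sym C(2) b(1)]
        component_eq[OF sym] by metis
  qed
  have fin: "finite {C \<in> components (X - S) ?R. \<not> C \<subseteq> F}"
    using finite_components[of "X - S" ?R] assms(2) by simp
  show ?thesis
    unfolding One_nat_def card_le_Suc0_iff_eq[OF fin] using same by blast
qed

lemma edge_boundary_component_within:
  assumes "symp E" and closed: "\<And>f. f \<in> F \<Longrightarrow> neighbours E f \<subseteq> X"
    and C: "C \<in> components (X - S) (local_graph X F E)" "C \<subseteq> F"
  shows "edge_boundary E C \<subseteq> {(k, s). s \<in> S \<and> k \<in> neighbours E s}"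
proof
  let ?R = "local_graph X F E"
  fix t assume "t \<in> edge_boundary E C"
  then obtain k u where t: "t = (k, u)" "k \<in> C" "u \<notin> C" "E k u"
    by (auto simp: edge_boundary_def)
  have "k \<in> F" "k \<in> X - S" "u \<noteq> k"
    using t C components_subset by blast+
  then have "u \<in> X"
    using closed t(4) by (auto simp: neighbours_def)
  have "u \<in> S"
  proof (rule ccontr)
    assume "u \<notin> S"
    then have "induced (X - S) ?R k u"
      using \<open>k \<in> F\<close> \<open>k \<in> X - S\<close> \<open>u \<noteq> k\<close> \<open>u \<in> X\<close> t(4)
      by (auto simp: induced_def local_graph_def)
    then have "u \<in> component (X - S) ?R k"
      by (simp add: component_def)
    then show False
      using components_eq_component[OF simple_graph_symp[OF simple_graph_local_graph[OF assms(1)]] C(1) t(2)]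
        t(3) by simp
  qed
  then show "t \<in> {(k, s). s \<in> S \<and> k \<in> neighbours E s}"
    using t \<open>u \<noteq> k\<close> assms(1) by (auto simp: neighbours_def dest: sympD)
qed

lemma partner_pair_eq: "p (p f) = f \<Longrightarrow> t \<in> {f, p f} \<Longrightarrow> {f, p f} = {t, p t}"
  by (auto simp: insert_commute)

lemma matching_of_perfect_matching_map:
  assumes p: "perfect_matching_map X R p" and "F \<subseteq> X" and E: "\<And>f. f \<in> F \<Longrightarrow> E f (p f)"
  shows "matching E ((\<lambda>f. {f, p f}) ` F)"
  unfolding matching_def
proof (intro conjI ballI impI)
  fix e assume "e \<in> (\<lambda>f. {f, p f}) ` F"
  then obtain f where f: "f \<in> F" "e = {f, p f}"
    by blast
  then have "p f \<noteq> f"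
    using p \<open>F \<subseteq> X\<close> by (auto simp: perfect_matching_map_def)
  then show "\<exists>u v. e = {u, v} \<and> u \<noteq> v \<and> E u v"
    using f E by (intro exI[of _ f] exI[of _ "p f"]) simp
next
  fix e1 e2 assume e: "e1 \<in> (\<lambda>f. {f, p f}) ` F" "e2 \<in> (\<lambda>f. {f, p f}) ` F" "e1 \<noteq> e2"
  then obtain f g where "f \<in> F" "g \<in> F" and fg: "e1 = {f, p f}" "e2 = {g, p g}"
    by blast
  then have "p (p f) = f" "p (p g) = g"
    using p \<open>F \<subseteq> X\<close> by (auto simp: perfect_matching_map_def)
  show "e1 \<inter> e2 = {}"
  proof (rule ccontr)
    assume "e1 \<inter> e2 \<noteq> {}"
    then obtain t where "t \<in> e1" "t \<in> e2"
      by blast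
    then have "e1 = {t, p t}" "e2 = {t, p t}"
      using partner_pair_eq[of p f t] partner_pair_eq[of p g t] \<open>p (p f) = f\<close> \<open>p (p g) = g\<close>
      unfolding fg by simp_all
    then show False
      using e(3) by simp
  qed
qed

context locally_finite_vertex_transitive
begin

lemma card_edges_at_le:
  assumes "finite S" "S \<subseteq> V"
  shows "card {(k, s). s \<in> S \<and> k \<in> neighbours E s} \<le> d * card S"
proof -
  have eq: "{(k, s). s \<in> S \<and> k \<in> neighbours E s} = (\<lambda>(s, k). (k, s)) ` Sigma S (neighbours E)"
    by auto
  have "finite (Sigma S (neighbours E))"
    using assms finite_neighbours by (intro finite_SigmaI) auto
  then have "card {(k, s). s \<in> S \<and> k \<in> neighbours E s} \<le> card (Sigma S (neighbours E))"
    unfolding eq by (rule card_image_le)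
  also have "\<dots> = (\<Sum>s\<in>S. card (neighbours E s))"
    using assms finite_neighbours by (intro card_SigmaI) auto
  also have "\<dots> = d * card S"
    using assms degree by (simp add: subset_iff)
  finally show ?thesis .
qed

text \<open>An odd component of \<open>X - S\<close> inside \<open>F\<close> sends its at least \<open>d\<close> boundary edges to \<open>S\<close>,
  which receives at most \<open>d |S|\<close> edges.\<close>

lemma card_components_within_le:
  assumes X: "finite X" "X \<subseteq> V" and SX: "S \<subseteq> X"
    and closed: "\<And>f. f \<in> F \<Longrightarrow> neighbours E f \<subseteq> X"
  shows "card {C \<in> components (X - S) (local_graph X F E). C \<subseteq> F} \<le> card S"
proof -
  let ?R = "local_graph X F E"
  define Q where "Q = {C \<in> components (X - S) ?R. C \<subseteq> F}"
  have sym: "symp E"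
    using graph by (rule graph_symp)
  have finS: "finite S"
    using SX X(1) by (rule finite_subset)
  have finQ: "finite Q"
    using X(1) finite_components[of "X - S" ?R] by (simp add: Q_def)
  have piece: "piece C" if "C \<in> Q" for C
  proof -
    have "C \<in> components (X - S) ?R"
      using that by (simp add: Q_def)
    then have "C \<subseteq> X" "C \<noteq> {}"
      using components_nonempty components_subset by blast+
    then show ?thesis
      using finite_subset[OF _ X(1)] X(2) by (auto simp: piece_def)
  qed
  have "d * card Q = (\<Sum>C\<in>Q. d)"
    by simp
  also have "\<dots> \<le> (\<Sum>C\<in>Q. card (edge_boundary E C))"
    using degree_le_edge_boundary piece by (intro sum_mono) auto
  also have "\<dots> = card (\<Union>C\<in>Q. edge_boundary E C)"
  proof (rule card_UN_disjoint[symmetric])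
    show "\<forall>C\<in>Q. finite (edge_boundary E C)"
      using piece finite_edge_boundary by blast
    show "\<forall>C1\<in>Q. \<forall>C2\<in>Q. C1 \<noteq> C2 \<longrightarrow> edge_boundary E C1 \<inter> edge_boundary E C2 = {}"
    proof (intro ballI impI)
      fix C1 C2 assume "C1 \<in> Q" "C2 \<in> Q" "C1 \<noteq> C2"
      then have "C1 \<inter> C2 = {}"
        using components_disjoint[OF simple_graph_symp[OF simple_graph_local_graph[OF sym]]]
        unfolding Q_def by blast
      then show "edge_boundary E C1 \<inter> edge_boundary E C2 = {}"
        by (auto simp: edge_boundary_def)
    qed
  qed (rule finQ)
  also have "\<dots> \<le> card {(k, s). s \<in> S \<and> k \<in> neighbours E s}"
  proof (rule card_mono)
    have "finite (\<Union>s\<in>S. neighbours E s)"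
      using finS SX X(2) finite_neighbours by (intro finite_UN_I) auto
    then have "finite ((\<Union>s\<in>S. neighbours E s) \<times> S)"
      using finS by simp
    then show "finite {(k, s). s \<in> S \<and> k \<in> neighbours E s}"
      by (rule finite_subset[rotated]) auto
    show "(\<Union>C\<in>Q. edge_boundary E C) \<subseteq> {(k, s). s \<in> S \<and> k \<in> neighbours E s}"
      using edge_boundary_component_within[OF sym closed] by (auto simp: Q_def)
  qed
  also have "\<dots> \<le> d * card S"
    using finS SX X(2) by (intro card_edges_at_le) auto
  finally show ?thesis
    using degree_pos by (simp add: Q_def)
qed

text \<open>Besides the odd components inside \<open>F\<close>, at most one meets the clique \<open>X - F\<close>, and parity
  absorbs it.\<close>

lemma tutte_condition_local_graph:
  assumes X: "finite X" "X \<subseteq> V" "even (card X)" "F \<subseteq> X"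
    and closed: "\<And>f. f \<in> F \<Longrightarrow> neighbours E f \<subseteq> X"
  shows "tutte_condition X (local_graph X F E)"
  unfolding tutte_condition_def
proof (intro allI impI)
  let ?R = "local_graph X F E"
  fix S assume SX: "S \<subseteq> X"
  have sym: "symp E"
    using graph by (rule graph_symp)
  define Q where "Q = {C \<in> components (X - S) ?R. C \<subseteq> F}"
  have finQ: "finite Q"
    using X(1) finite_components[of "X - S" ?R] by (simp add: Q_def)
  have "card Q \<le> card S"
    unfolding Q_def using X(1,2) SX closed by (rule card_components_within_le)
  moreover have "card (odd_components (X - S) ?R) \<le> card Q + 1"
  proof -
    have "odd_components (X - S) ?R \<subseteq> Q \<union> {C \<in> components (X - S) ?R. \<not> C \<subseteq> F}"
      by (auto simp: odd_components_def Q_def)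
    moreover have "finite {C \<in> components (X - S) ?R. \<not> C \<subseteq> F}"
      using X(1) finite_components[of "X - S" ?R] by simp
    ultimately have "card (odd_components (X - S) ?R) \<le> card (Q \<union> {C \<in> components (X - S) ?R. \<not> C \<subseteq> F})"
      using finQ by (intro card_mono) auto
    also have "\<dots> \<le> card Q + card {C \<in> components (X - S) ?R. \<not> C \<subseteq> F}"
      by (rule card_Un_le)
    finally have "card (odd_components (X - S) ?R) \<le> card Q + card {C \<in> components (X - S) ?R. \<not> C \<subseteq> F}" .
    then show ?thesis
      using card_components_not_within_le_1[OF sym X(1), of S F] by linarith
  qed
  moreover have "even (card (X - S)) \<longleftrightarrow> even (card (odd_components (X - S) ?R))"
    using X(1) simple_graph_symp[OF simple_graph_local_graph[OF sym]]
    by (intro even_card_iff_even_card_odd_components) auto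
  moreover have "card (X - S) = card X - card S" "card S \<le> card X"
    using SX X(1) by (simp_all add: card_Diff_subset finite_subset card_mono)
  moreover have "\<And>a q s y x :: nat. a \<le> q + 1 \<Longrightarrow> q \<le> s \<Longrightarrow> (even y \<longleftrightarrow> even a) \<Longrightarrow>
      y = x - s \<Longrightarrow> s \<le> x \<Longrightarrow> even x \<Longrightarrow> a \<le> s"
    by presburger
  ultimately show "card (odd_components (X - S) ?R) \<le> card S"
    using X(3) by metis
qed

lemma even_closed_superset:
  assumes "finite F" "F \<subseteq> V"
  obtains X where "finite X" "X \<subseteq> V" "even (card X)" "F \<subseteq> X"
    "\<And>f. f \<in> F \<Longrightarrow> neighbours E f \<subseteq> X"
proof -
  define B where "B = F \<union> (\<Union>f\<in>F. neighbours E f)"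
  have B: "finite B" "B \<subseteq> V" "F \<subseteq> B" "\<And>f. f \<in> F \<Longrightarrow> neighbours E f \<subseteq> B"
    using assms finite_neighbours edge_in_V by (auto simp: B_def neighbours_def)
  show ?thesis
  proof (cases "even (card B)")
    case True
    then show ?thesis
      using that B by blast
  next
    case False
    obtain z where "z \<in> V" "z \<notin> B"
      using infinite B(1,2) by (metis finite_subset subsetI)
    then show ?thesis
      using that[of "insert z B"] B False by auto
  qed
qed

lemma matching_covering:
  assumes "finite F" "F \<subseteq> V"
  shows "\<exists>M. matching E M \<and> covers M F"
proof -
  obtain X where X: "finite X" "X \<subseteq> V" "even (card X)" "F \<subseteq> X"
    and closed: "\<And>f. f \<in> F \<Longrightarrow> neighbours E f \<subseteq> X"
    using even_closed_superset[OF assms] by blast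
  have "simple_graph X (local_graph X F E)"
    using graph_symp[OF graph] by (rule simple_graph_local_graph)
  then obtain p where p: "perfect_matching_map X (local_graph X F E) p"
    using tutte_theorem X tutte_condition_local_graph[OF X closed] by blast
  then have "E f (p f)" if "f \<in> F" for f
    using that X(4) by (auto simp: perfect_matching_map_def local_graph_def)
  then have "matching E ((\<lambda>f. {f, p f}) ` F)"
    by (rule matching_of_perfect_matching_map[OF p X(4)])
  moreover have "covers ((\<lambda>f. {f, p f}) ` F) F"
    by (auto simp: covers_def)
  ultimately show ?thesis
    by blast
qed

end

theorem theorem1p2:
  fixes V :: "'a set" and E :: "'a \<Rightarrow> 'a \<Rightarrow> bool"
  assumes "graph V E"
    and "countable V" and "infinite V"
    and "connected_graph V E"
    and "vertex_transitive V E"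
  shows "\<exists>M. perfect_matching V E M"
proof -
  obtain v where v: "v \<in> V"
    using assms(3) by fastforce
  note same_degree = vertex_transitive_neighbours[OF assms(1,5) v]
  show ?thesis
  proof (cases "finite (neighbours E v)")
    case False
    then show ?thesis
      using same_degree(2) by (intro perfect_matching_if_infinite_degrees[OF assms(2)]) simp
  next
    case True
    interpret locally_finite_vertex_transitive V E "card (neighbours E v)"
      by unfold_locales (use assms True same_degree in simp_all)
    show ?thesis
      using graph_symp[OF assms(1)] assms(2) finite_neighbours matching_covering
      by (rule perfect_matching_if_finite_sets_coverable)
  qed
qed

end
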